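(* Let $\mu$ be the local limit of a locally convergent sequence of finite graphs, and let $\mathcal E$ be a local event on rooted graphs. Then for every $\delta>0$, $r\in\mathbb N$ and $p\in[0,1]$ there is a constant $D\in\mathbb N$ (depending on $\delta$ and $r$) such that $$\Pr\big(\exists u\in\mathcal N_r(o;G)\text{ with }\mathcal E(G(p),u)\big)\le D\,\Pr\big(\mathcal E(G(p),o)\big)+\delta,$$ where probabilities are over $(G,o)\sim\mu$ and the independent percolation.
   Context: $\mathcal N_r(v;G)$ is the subgraph induced by vertices within graph distance $r$ of $v$. A local event $\mathcal E$ is a set of rooted graphs such that whether $(G,u)\in\mathcal E$ (written $\mathcal E(G,u)$) is determined by the isomorphism class of $\mathcal N_R(u;G)$ rooted at $u$, for some fixed $R$. $G(p)$: independent bond percolation with retention probability $p$. Local convergence: $\mathcal G^*$ is the space of rooted locally finite graphs modulo root-preserving isomorphism with the local metric; $G_n$ ($n$ vertices) converges locally to a probability measure $\mu$ on $\mathcal G^*$ if $\frac1n\sum_v f(G_n,v)\to\mathbb E_\mu[f]$ in probability for all bounded continuous $f$ (such limits are unimodular). *)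

theory Defs
  imports "HOL-Probability.Probability"
begin

type_synonym graph = "nat \<Rightarrow> nat \<Rightarrow> bool"
type_synonym rgraph = "graph \<times> nat"

definition lf_graph :: "graph \<Rightarrow> bool" where
  "lf_graph G \<longleftrightarrow> (\<forall>u v. G u v \<longleftrightarrow> G v u) \<and> (\<forall>u. \<not> G u u) \<and> (\<forall>u. finite {v. G u v})"

definition ball :: "graph \<Rightarrow> nat \<Rightarrow> nat \<Rightarrow> nat set" where
  "ball G r x = {v. \<exists>k\<le>r. (G ^^ k) x v}"

definition ball_iso :: "nat \<Rightarrow> rgraph \<Rightarrow> rgraph \<Rightarrow> bool" where
  "ball_iso r X Y \<longleftrightarrow>
     (\<exists>\<phi>. bij_betw \<phi> (ball (fst X) r (snd X)) (ball (fst Y) r (snd Y)) \<and> \<phi> (snd X) = snd Y \<and>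
        (\<forall>u\<in>ball (fst X) r (snd X). \<forall>v\<in>ball (fst X) r (snd X).
            fst X u v \<longleftrightarrow> fst Y (\<phi> u) (\<phi> v)))"

definition local_event :: "(rgraph \<Rightarrow> bool) \<Rightarrow> bool" where
  "local_event E \<longleftrightarrow>
     (\<exists>R. \<forall>X Y. lf_graph (fst X) \<longrightarrow> lf_graph (fst Y) \<longrightarrow> ball_iso R X Y \<longrightarrow> (E X \<longleftrightarrow> E Y))"

text \<open>Continuity w.r.t. the local metric (d < 1/(1+r) iff the r-balls are rooted isomorphic).\<close>
definition locally_continuous :: "(rgraph \<Rightarrow> real) \<Rightarrow> bool" where
  "locally_continuous f \<longleftrightarrow>
     (\<forall>X. lf_graph (fst X) \<longrightarrow> (\<forall>\<epsilon>>0. \<exists>r. \<forall>Y. lf_graph (fst Y) \<longrightarrow> ball_iso r X Y \<longrightarrow>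
          \<bar>f X - f Y\<bar> < \<epsilon>))"

definition bounded_on_lf :: "(rgraph \<Rightarrow> real) \<Rightarrow> bool" where
  "bounded_on_lf f \<longleftrightarrow> (\<exists>B. \<forall>X. lf_graph (fst X) \<longrightarrow> \<bar>f X\<bar> \<le> B)"

definition finite_graph :: "nat \<Rightarrow> graph \<Rightarrow> bool" where
  "finite_graph n G \<longleftrightarrow> lf_graph G \<and> (\<forall>u v. G u v \<longrightarrow> u < n \<and> v < n)"

definition rg_space :: "rgraph measure" where
  "rg_space = restrict_space
     ((\<Pi>\<^sub>M u\<in>UNIV. \<Pi>\<^sub>M v\<in>UNIV. count_space UNIV) \<Otimes>\<^sub>M count_space UNIV)
     {X. lf_graph (fst X)}"

definition local_limit :: "rgraph measure \<Rightarrow> bool" where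
  "local_limit \<mu> \<longleftrightarrow>
     (\<exists>Gs. (\<forall>n. finite_graph n (Gs n)) \<and>
        (\<forall>f. locally_continuous f \<and> bounded_on_lf f \<longrightarrow>
           (\<lambda>n. (\<Sum>v<n. f (Gs n, v)) / real n) \<longlonglongrightarrow> integral\<^sup>L \<mu> f))"

text \<open>Independent retention variables; the edge {u,v} uses the variable at (min u v, max u v).\<close>
definition perc_measure :: "real \<Rightarrow> graph measure" where
  "perc_measure p = (\<Pi>\<^sub>M u\<in>UNIV. \<Pi>\<^sub>M v\<in>UNIV. measure_pmf (bernoulli_pmf p))"

definition perc_graph :: "graph \<Rightarrow> graph \<Rightarrow> graph" where
  "perc_graph G \<omega> = (\<lambda>u v. G u v \<and> \<omega> (min u v) (max u v))"

end

theory Submission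
  imports Defs
begin

text \<open>
  Write \<open>h\<^sub>r(G,o)\<close> for the percolation probability that some vertex of the \<open>r\<close>-ball
  around \<open>o\<close> satisfies \<open>\<E>\<close>. By Fubini the two sides of the inequality are the
  \<open>\<mu>\<close>-integrals of \<open>h\<^sub>r\<close> and \<open>h\<^sub>0\<close>. If \<open>\<E>\<close> is determined by \<open>R\<close>-balls, then \<open>h\<^sub>r\<close>
  depends only on the \<open>(r+R)\<close>-ball, so \<open>h\<^sub>r\<close> is bounded and locally continuous and
  \<open>\<integral>h\<^sub>r d\<mu>\<close> is the limit of the vertex averages of \<open>h\<^sub>r\<close> over the finite graphs \<open>G\<^sub>n\<close>.

  On a finite graph, the union bound gives \<open>h\<^sub>r(v) \<le> \<Sum>\<^bsub>u \<in> B\<^sub>r(v)\<^esub> h\<^sub>0(u)\<close> for every \<open>v\<close>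
  with \<open>|B\<^sub>2\<^sub>r(v)| \<le> M\<close>, and all such \<open>v\<close> whose \<open>r\<close>-ball contains a fixed \<open>u\<close> lie in
  one \<open>2r\<close>-ball, so there are at most \<open>M\<close> of them. Summing over \<open>v\<close> and passing to the
  limit gives \<open>\<integral>h\<^sub>r \<le> M \<integral>h\<^sub>0 + \<mu>(|B\<^sub>2\<^sub>r(o)| > M)\<close>, and the last term tends to \<open>0\<close>
  as \<open>M \<rightarrow> \<infinity>\<close> because balls of locally finite graphs are finite.
\<close>

section \<open>Balls\<close>

lemma ball_zero [simp]: "ball G 0 z = {z}"
  unfolding ball_def by auto

lemma center_in_ball [simp]: "x \<in> ball G r x"
  unfolding ball_def by (intro CollectI exI[of _ 0]) auto

lemma adj_in_ball_Suc: "w \<in> ball G m z \<Longrightarrow> G w v \<Longrightarrow> v \<in> ball G (Suc m) z"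
  unfolding ball_def
proof clarify
  fix k assume "k \<le> m" "(G ^^ k) z w" "G w v"
  then have "(G ^^ Suc k) z v" by auto
  then show "\<exists>k\<le>Suc m. (G ^^ k) z v" using \<open>k \<le> m\<close> by (intro exI[of _ "Suc k"]) auto
qed

lemma ball_mono: "m \<le> m' \<Longrightarrow> ball G m z \<subseteq> ball G m' z"
  unfolding ball_def using order_trans by blast

lemma ball_trans: "v \<in> ball G a u \<Longrightarrow> u \<in> ball G b z \<Longrightarrow> v \<in> ball G (b + a) z"
  unfolding ball_def
proof clarify
  fix k j assume "k \<le> a" "(G ^^ k) u v" "j \<le> b" "(G ^^ j) z u"
  then have "(G ^^ (j + k)) z v" by (auto simp: relpowp_add)
  with \<open>k \<le> a\<close> \<open>j \<le> b\<close> show "\<exists>k\<le>b + a. (G ^^ k) z v" by (intro exI[of _ "j + k"]) auto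
qed

lemma relpowp_sym:
  assumes "\<And>u v. G u v \<Longrightarrow> G v u"
  shows "(G ^^ k) x y \<Longrightarrow> (G ^^ k) y x"
proof (induction k arbitrary: y)
  case 0
  then show ?case by simp
next
  case (Suc k)
  from Suc.prems obtain w where w: "(G ^^ k) x w" "G w y" by auto
  have "(G ^^ (Suc 0 + k)) y x"
    unfolding relpowp_add using Suc.IH[OF w(1)] assms[OF w(2)] by auto
  then show ?case by simp
qed

lemma ball_sym: "lf_graph G \<Longrightarrow> v \<in> ball G a u \<Longrightarrow> u \<in> ball G a v"
  unfolding ball_def lf_graph_def using relpowp_sym[of G] by blast

lemma ball_Suc_subset: "ball G (Suc r) z \<subseteq> ball G r z \<union> (\<Union>w\<in>ball G r z. {v. G w v})"
proof
  fix v assume "v \<in> ball G (Suc r) z"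
  then obtain k where k: "k \<le> Suc r" "(G ^^ k) z v" unfolding ball_def by auto
  show "v \<in> ball G r z \<union> (\<Union>w\<in>ball G r z. {v. G w v})"
  proof (cases "k \<le> r")
    case True
    then show ?thesis using k unfolding ball_def by auto
  next
    case False
    with k obtain w where "(G ^^ r) z w" "G w v" by (auto simp: le_Suc_eq)
    then show ?thesis unfolding ball_def by auto
  qed
qed

lemma finite_ball: assumes "lf_graph G" shows "finite (ball G r z)"
proof (induction r)
  case 0
  then show ?case by simp
next
  case (Suc r)
  have "\<forall>w. finite {v. G w v}" using assms unfolding lf_graph_def by auto
  then show ?case using Suc by (intro finite_subset[OF ball_Suc_subset]) auto
qed

lemma ball_subset_lessThan: assumes "finite_graph n G" "x < n" shows "ball G r x \<subseteq> {..<n}"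
proof
  fix v assume "v \<in> ball G r x"
  then obtain k where k: "(G ^^ k) x v" unfolding ball_def by auto
  show "v \<in> {..<n}"
  proof (cases k)
    case 0
    then show ?thesis using k assms by auto
  next
    case (Suc j)
    then obtain w where "G w v" using k by auto
    then show ?thesis using assms unfolding finite_graph_def by auto
  qed
qed

lemma lf_graph_perc_graph: "lf_graph G \<Longrightarrow> lf_graph (perc_graph G \<omega>)"
  unfolding lf_graph_def perc_graph_def
  by (auto simp: min.commute max.commute intro: finite_subset[rotated])

section \<open>Isomorphisms of balls\<close>

text \<open>
  Since \<open>H \<le> G\<close>, the bound \<open>a + k \<le> K\<close> keeps the walk inside the ball on which
  \<open>\<phi>\<close> is a homomorphism.
\<close>
lemma relpowp_ball_hom:
  assumes HG: "\<forall>u v. H u v \<longrightarrow> G u v"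
    and hom: "\<forall>u\<in>ball G K z. \<forall>v\<in>ball G K z. H u v \<longrightarrow> H' (\<phi> u) (\<phi> v)"
    and x: "x \<in> ball G a z"
  shows "a + k \<le> K \<Longrightarrow> (H ^^ k) x v \<Longrightarrow> v \<in> ball G (a + k) z \<and> (H' ^^ k) (\<phi> x) (\<phi> v)"
proof (induction k arbitrary: v)
  case 0
  then show ?case using x by simp
next
  case (Suc k)
  from Suc.prems(2) obtain w where w: "(H ^^ k) x w" "H w v" by auto
  from Suc.IH[OF _ w(1)] Suc.prems(1)
  have IH: "w \<in> ball G (a + k) z" "(H' ^^ k) (\<phi> x) (\<phi> w)" by auto
  have v: "v \<in> ball G (a + Suc k) z" using adj_in_ball_Suc[OF IH(1)] HG w(2) by auto
  have "w \<in> ball G K z" using IH(1) ball_mono[of "a + k" K G z] Suc.prems(1) by auto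
  moreover have "v \<in> ball G K z" using v ball_mono[of "a + Suc k" K G z] Suc.prems(1) by auto
  ultimately have "H' (\<phi> w) (\<phi> v)" using hom w(2) by auto
  with IH(2) have "(H' ^^ Suc k) (\<phi> x) (\<phi> v)" by auto
  with v show ?case by auto
qed

lemma ball_hom_image:
  assumes HG: "\<forall>u v. H u v \<longrightarrow> G u v"
    and homH: "\<forall>u\<in>ball G K z. \<forall>v\<in>ball G K z. H u v \<longrightarrow> H' (\<phi> u) (\<phi> v)"
    and homG: "\<forall>u\<in>ball G K z. \<forall>v\<in>ball G K z. G u v \<longrightarrow> G' (\<phi> u) (\<phi> v)"
    and z: "\<phi> z = z'"
    and x: "x \<in> ball G a z" and aR: "a + R \<le> K"
  shows "ball H R x \<subseteq> ball G K z" "\<phi> ` ball H R x \<subseteq> ball H' R (\<phi> x)" "\<phi> x \<in> ball G' a z'"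
proof -
  have walk: "v \<in> ball G (a + k) z \<and> (H' ^^ k) (\<phi> x) (\<phi> v)" if "k \<le> R" "(H ^^ k) x v" for k v
    using relpowp_ball_hom[of H G K z H' \<phi> x a, OF HG homH x] that aR by auto
  show "ball H R x \<subseteq> ball G K z"
  proof
    fix v assume "v \<in> ball H R x"
    then obtain k where "k \<le> R" "(H ^^ k) x v" unfolding ball_def by auto
    then show "v \<in> ball G K z" using walk ball_mono[of "a + k" K G z] aR by auto
  qed
  show "\<phi> ` ball H R x \<subseteq> ball H' R (\<phi> x)"
  proof
    fix v' assume "v' \<in> \<phi> ` ball H R x"
    then obtain v k where "v' = \<phi> v" "k \<le> R" "(H ^^ k) x v" unfolding ball_def by auto
    then show "v' \<in> ball H' R (\<phi> x)" using walk unfolding ball_def by auto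
  qed
  from x obtain k where k: "k \<le> a" "(G ^^ k) z x" unfolding ball_def by auto
  have "(G' ^^ k) (\<phi> z) (\<phi> x)"
    using relpowp_ball_hom[of G G K z G' \<phi> z 0 k x] k aR homG by auto
  then show "\<phi> x \<in> ball G' a z'" using k z unfolding ball_def by auto
qed

lemma ball_iso_inv:
  assumes bij: "bij_betw \<phi> (ball G K z) (ball G' K z')" and z: "\<phi> z = z'"
    and adj: "\<forall>u\<in>ball G K z. \<forall>v\<in>ball G K z. G u v \<longleftrightarrow> G' (\<phi> u) (\<phi> v)"
  defines "\<psi> \<equiv> inv_into (ball G K z) \<phi>"
  shows "bij_betw \<psi> (ball G' K z') (ball G K z)" "\<psi> z' = z"
    "\<forall>u\<in>ball G' K z'. \<forall>v\<in>ball G' K z'. G' u v \<longleftrightarrow> G (\<psi> u) (\<psi> v)"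
    "\<And>u. u \<in> ball G K z \<Longrightarrow> \<psi> (\<phi> u) = u" "\<And>u'. u' \<in> ball G' K z' \<Longrightarrow> \<phi> (\<psi> u') = u'"
proof -
  show bij': "bij_betw \<psi> (ball G' K z') (ball G K z)"
    unfolding \<psi>_def by (rule bij_betw_inv_into[OF bij])
  show psiphi: "\<And>u. u \<in> ball G K z \<Longrightarrow> \<psi> (\<phi> u) = u"
    unfolding \<psi>_def using bij bij_betw_inv_into_left by fastforce
  show phipsi: "\<And>u'. u' \<in> ball G' K z' \<Longrightarrow> \<phi> (\<psi> u') = u'"
    unfolding \<psi>_def using bij bij_betw_inv_into_right by fastforce
  show "\<psi> z' = z" using psiphi[of z] z by simp
  show "\<forall>u\<in>ball G' K z'. \<forall>v\<in>ball G' K z'. G' u v \<longleftrightarrow> G (\<psi> u) (\<psi> v)"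
    using adj bij_betwE[OF bij'] phipsi by metis
qed

lemma ball_iso_image_ball:
  assumes bij: "bij_betw \<phi> (ball G K z) (ball G' K z')" and z: "\<phi> z = z'"
    and adj: "\<forall>u\<in>ball G K z. \<forall>v\<in>ball G K z. G u v \<longleftrightarrow> G' (\<phi> u) (\<phi> v)"
    and r: "r \<le> K"
  shows "\<phi> ` ball G r z = ball G' r z'"
proof -
  note inv = ball_iso_inv[OF bij z adj]
  let ?\<psi> = "inv_into (ball G K z) \<phi>"
  have fwd: "\<phi> x \<in> ball G' r z'" if "x \<in> ball G r z" for x
    by (rule ball_hom_image(3)[of G G K z G' \<phi> G' z' x r 0]) (use adj z r that in auto)
  have bwd: "?\<psi> x' \<in> ball G r z" if "x' \<in> ball G' r z'" for x'
    by (rule ball_hom_image(3)[of G' G' K z' G ?\<psi> G z x' r 0]) (use inv(2,3) r that in auto)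
  show ?thesis
  proof (intro equalityI image_subsetI subsetI)
    fix x' assume x': "x' \<in> ball G' r z'"
    then have "x' = \<phi> (?\<psi> x')" using inv(5) subsetD[OF ball_mono[OF r]] by metis
    then show "x' \<in> \<phi> ` ball G r z" using bwd[OF x'] by blast
  qed (rule fwd)
qed

lemma ball_iso_subgraph:
  assumes HG: "\<forall>u v. H u v \<longrightarrow> G u v" and HG': "\<forall>u v. H' u v \<longrightarrow> G' u v"
    and bij: "bij_betw \<phi> (ball G K z) (ball G' K z')" and z: "\<phi> z = z'"
    and adjG: "\<forall>u\<in>ball G K z. \<forall>v\<in>ball G K z. G u v \<longleftrightarrow> G' (\<phi> u) (\<phi> v)"
    and adjH: "\<forall>u\<in>ball G K z. \<forall>v\<in>ball G K z. H u v \<longleftrightarrow> H' (\<phi> u) (\<phi> v)"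
    and x: "x \<in> ball G a z" and aR: "a + R \<le> K"
  shows "ball_iso R (H, x) (H', \<phi> x)"
proof -
  note inv = ball_iso_inv[OF bij z adjG]
  let ?\<psi> = "inv_into (ball G K z) \<phi>"
  have adjH': "H' u v \<longleftrightarrow> H (?\<psi> u) (?\<psi> v)" if "u \<in> ball G' K z'" "v \<in> ball G' K z'" for u v
  proof -
    have "?\<psi> u \<in> ball G K z" "?\<psi> v \<in> ball G K z" using bij_betwE[OF inv(1)] that by auto
    then show ?thesis using adjH inv(5)[OF that(1)] inv(5)[OF that(2)] by metis
  qed
  have fwd: "ball H R x \<subseteq> ball G K z" "\<phi> ` ball H R x \<subseteq> ball H' R (\<phi> x)" "\<phi> x \<in> ball G' a z'"
    by (rule ball_hom_image[of H G K z H' \<phi> G' z' x a R, OF HG _ _ z x aR]; use adjH adjG in blast)+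
  have bwd: "ball H' R (\<phi> x) \<subseteq> ball G' K z'" "?\<psi> ` ball H' R (\<phi> x) \<subseteq> ball H R (?\<psi> (\<phi> x))"
    by (rule ball_hom_image[of H' G' K z' H ?\<psi> G z "\<phi> x" a R, OF HG' _ _ inv(2) fwd(3) aR];
        use adjH' inv(3) in blast)+
  have xB: "x \<in> ball G K z" using x ball_mono[of a K G z] aR by auto
  define S where "S = ball H R x"
  define S' where "S' = ball H' R (\<phi> x)"
  have SB: "S \<subseteq> ball G K z" and SB': "S' \<subseteq> ball G' K z'"
    using fwd(1) bwd(1) unfolding S_def S'_def .
  have img: "\<phi> ` S = S'"
  proof (intro equalityI)
    show "\<phi> ` S \<subseteq> S'" using fwd(2) unfolding S_def S'_def .
    show "S' \<subseteq> \<phi> ` S"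
    proof
      fix x' assume "x' \<in> S'"
      then have "x' = \<phi> (?\<psi> x')" "?\<psi> x' \<in> S"
        using inv(5) SB' bwd(2) inv(4)[OF xB] unfolding S_def S'_def by auto
      then show "x' \<in> \<phi> ` S" by blast
    qed
  qed
  have "inj_on \<phi> S" using SB inv(4) by (metis inj_on_inverseI subsetD)
  with img have "bij_betw \<phi> S S'" by (simp add: bij_betw_def)
  moreover have "\<forall>u\<in>S. \<forall>v\<in>S. H u v \<longleftrightarrow> H' (\<phi> u) (\<phi> v)" using adjH SB by blast
  ultimately show ?thesis unfolding ball_iso_def S_def S'_def by auto
qed

section \<open>Percolation events depending on finitely many edges\<close>

definition config_weight :: "real \<Rightarrow> (nat \<times> nat) set \<Rightarrow> (nat \<times> nat \<Rightarrow> bool) \<Rightarrow> real" where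
  "config_weight p F b = (\<Prod>e\<in>F. if b e then p else 1 - p)"

definition cylinder :: "(nat \<times> nat) set \<Rightarrow> (nat \<times> nat \<Rightarrow> bool) \<Rightarrow> graph set" where
  "cylinder F b = {\<omega>. \<forall>e\<in>F. \<omega> (fst e) (snd e) = b e}"

definition config_graph :: "(nat \<times> nat) set \<Rightarrow> (nat \<times> nat \<Rightarrow> bool) \<Rightarrow> graph" where
  "config_graph F b = (\<lambda>u v. (u, v) \<in> F \<and> b (u, v))"

lemma space_perc_measure [simp]: "space (perc_measure p) = UNIV"
  by (auto simp: perc_measure_def space_PiM PiE_def extensional_def)

lemma prob_space_perc_measure: "prob_space (perc_measure p)"
  unfolding perc_measure_def by (intro prob_space_PiM prob_space_measure_pmf)

lemma config_weight_nonneg: "0 \<le> p \<Longrightarrow> p \<le> 1 \<Longrightarrow> 0 \<le> config_weight p F b"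
  unfolding config_weight_def by (intro prod_nonneg) auto

lemma cylinder_eq_prod_emb:
  fixes M :: "(nat \<Rightarrow> bool) measure" and B :: "bool measure" and F :: "(nat \<times> nat) set"
  assumes M: "M = (\<Pi>\<^sub>M v\<in>UNIV. B)" and B: "space B = UNIV"
  defines "Fu \<equiv> \<lambda>u. {v. (u, v) \<in> F}"
  shows "cylinder F b = prod_emb UNIV (\<lambda>_. M) (fst ` F)
           (\<Pi>\<^sub>E u\<in>fst ` F. prod_emb UNIV (\<lambda>_. B) (Fu u) (\<Pi>\<^sub>E v\<in>Fu u. {b (u, v)}))"
proof -
  have spM: "space M = UNIV" unfolding M by (auto simp: space_PiM PiE_def extensional_def B)
  have "\<omega> \<in> cylinder F b \<longleftrightarrow> \<omega> \<in> prod_emb UNIV (\<lambda>_. M) (fst ` F)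
           (\<Pi>\<^sub>E u\<in>fst ` F. prod_emb UNIV (\<lambda>_. B) (Fu u) (\<Pi>\<^sub>E v\<in>Fu u. {b (u, v)}))" for \<omega>
  proof -
    have sp: "\<omega> \<in> space (\<Pi>\<^sub>M u\<in>UNIV. M)" "\<And>u. \<omega> u \<in> space (\<Pi>\<^sub>M v\<in>UNIV. B)"
      by (auto simp: space_PiM spM B PiE_def extensional_def)
    have "\<omega> \<in> prod_emb UNIV (\<lambda>_. M) (fst ` F)
           (\<Pi>\<^sub>E u\<in>fst ` F. prod_emb UNIV (\<lambda>_. B) (Fu u) (\<Pi>\<^sub>E v\<in>Fu u. {b (u, v)}))
       \<longleftrightarrow> (\<forall>u\<in>fst ` F. \<forall>v\<in>Fu u. \<omega> u v = b (u, v))"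
      using sp by (simp add: prod_emb_def restrict_PiE_iff spM B PiE_def extensional_def Pi_def Ball_def)
    also have "\<dots> \<longleftrightarrow> \<omega> \<in> cylinder F b"
      unfolding cylinder_def Fu_def by force
    finally show ?thesis by simp
  qed
  then show ?thesis by blast
qed

lemma
  assumes F: "finite F" and p: "0 \<le> p" "p \<le> 1"
  shows cylinder_in_sets: "cylinder F b \<in> sets (perc_measure p)"
    and emeasure_cylinder: "emeasure (perc_measure p) (cylinder F b) = ennreal (config_weight p F b)"
proof -
  define B where "B = measure_pmf (bernoulli_pmf p)"
  define M where "M = (\<Pi>\<^sub>M v\<in>(UNIV :: nat set). B)"
  define J where "J = fst ` F"
  define Fu where "Fu u = {v. (u, v) \<in> F}" for u
  define C where "C u = prod_emb UNIV (\<lambda>_. B) (Fu u) (\<Pi>\<^sub>E v\<in>Fu u. {b (u, v)})" for u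
  have P: "perc_measure p = (\<Pi>\<^sub>M u\<in>UNIV. M)" unfolding perc_measure_def M_def B_def ..
  have eq: "cylinder F b = prod_emb UNIV (\<lambda>_. M) J (\<Pi>\<^sub>E u\<in>J. C u)"
    unfolding J_def C_def Fu_def by (rule cylinder_eq_prod_emb[OF M_def]) (simp add: B_def)
  have finJ: "finite J" using F unfolding J_def by auto
  have finFu: "finite (Fu u)" for u
  proof -
    have "Fu u \<subseteq> snd ` F" unfolding Fu_def by force
    then show ?thesis using F finite_subset by auto
  qed
  have Cs: "C u \<in> sets M" for u
    unfolding C_def M_def by (intro measurable_prod_emb sets_PiM_I_finite finFu) (auto simp: B_def)
  show "cylinder F b \<in> sets (perc_measure p)"
    unfolding eq P by (intro measurable_prod_emb sets_PiM_I_finite finJ Cs) auto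
  have pB: "prob_space B" unfolding B_def by (rule prob_space_measure_pmf)
  have pM: "prob_space M" unfolding M_def using pB by (intro prob_space_PiM) auto
  have eC: "emeasure M (C u) = (\<Prod>v\<in>Fu u. ennreal (if b (u, v) then p else 1 - p))" for u
  proof -
    have "emeasure M (C u) = (\<Prod>v\<in>Fu u. emeasure B {b (u, v)})"
      unfolding M_def C_def using pB finFu by (intro emeasure_PiM_emb) (auto simp: B_def)
    also have "\<dots> = (\<Prod>v\<in>Fu u. ennreal (if b (u, v) then p else 1 - p))"
      unfolding B_def using p by (intro prod.cong refl) (auto simp: emeasure_pmf_single)
    finally show ?thesis .
  qed
  have "emeasure (perc_measure p) (cylinder F b) = (\<Prod>u\<in>J. emeasure M (C u))"
    unfolding eq P using pM finJ Cs by (intro emeasure_PiM_emb) auto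
  also have "\<dots> = (\<Prod>e\<in>Sigma J Fu. ennreal (if b e then p else 1 - p))"
    using finJ finFu by (simp add: eC prod.Sigma)
  also have "Sigma J Fu = F" unfolding J_def Fu_def by force
  also have "(\<Prod>e\<in>F. ennreal (if b e then p else 1 - p)) = ennreal (config_weight p F b)"
    unfolding config_weight_def using p by (subst prod_ennreal) auto
  finally show "emeasure (perc_measure p) (cylinder F b) = ennreal (config_weight p F b)" .
qed

lemma finitely_determined_eq_Union_cylinder:
  assumes dep: "\<And>\<omega> \<omega>'. (\<forall>e\<in>F. \<omega> (fst e) (snd e) = \<omega>' (fst e) (snd e)) \<Longrightarrow> Q \<omega> = Q \<omega>'"
  shows "{\<omega>. Q \<omega>} = (\<Union>b\<in>{b\<in>F \<rightarrow>\<^sub>E UNIV. Q (config_graph F b)}. cylinder F b)"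
proof (intro equalityI subsetI)
  fix \<omega> assume "\<omega> \<in> {\<omega>. Q \<omega>}"
  then have Q: "Q \<omega>" by simp
  define b where "b = restrict (\<lambda>e. \<omega> (fst e) (snd e)) F"
  have "Q (config_graph F b)" using dep[of "config_graph F b" \<omega>] Q unfolding config_graph_def b_def by auto
  moreover have "b \<in> F \<rightarrow>\<^sub>E UNIV" unfolding b_def by simp
  moreover have "\<omega> \<in> cylinder F b" unfolding cylinder_def b_def by simp
  ultimately show "\<omega> \<in> (\<Union>b\<in>{b\<in>F \<rightarrow>\<^sub>E UNIV. Q (config_graph F b)}. cylinder F b)"
    by blast
next
  fix \<omega> assume "\<omega> \<in> (\<Union>b\<in>{b\<in>F \<rightarrow>\<^sub>E UNIV. Q (config_graph F b)}. cylinder F b)"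
  then obtain b where b: "Q (config_graph F b)" "\<omega> \<in> cylinder F b" by auto
  then have "\<forall>e\<in>F. config_graph F b (fst e) (snd e) = \<omega> (fst e) (snd e)"
    unfolding cylinder_def config_graph_def by simp
  then have "Q (config_graph F b) = Q \<omega>" by (rule dep)
  with b(1) show "\<omega> \<in> {\<omega>. Q \<omega>}" by simp
qed

lemma disjoint_family_on_cylinder: "disjoint_family_on (cylinder F) (F \<rightarrow>\<^sub>E UNIV)"
  unfolding disjoint_family_on_def
proof (intro ballI impI)
  fix b b' :: "nat \<times> nat \<Rightarrow> bool" assume "b \<in> F \<rightarrow>\<^sub>E UNIV" "b' \<in> F \<rightarrow>\<^sub>E UNIV" "b \<noteq> b'"
  then obtain e where "e \<in> F" "b e \<noteq> b' e" using PiE_ext[of b F _ b'] by blast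
  then show "cylinder F b \<inter> cylinder F b' = {}" unfolding cylinder_def by auto
qed

lemma
  assumes F: "finite F" and p: "0 \<le> p" "p \<le> 1"
    and dep: "\<And>\<omega> \<omega>'. (\<forall>e\<in>F. \<omega> (fst e) (snd e) = \<omega>' (fst e) (snd e)) \<Longrightarrow> Q \<omega> = Q \<omega>'"
  shows finitely_determined_in_sets: "{\<omega>. Q \<omega>} \<in> sets (perc_measure p)"
    and measure_finitely_determined: "measure (perc_measure p) {\<omega>. Q \<omega>} =
      (\<Sum>b\<in>{b\<in>F \<rightarrow>\<^sub>E UNIV. Q (config_graph F b)}. config_weight p F b)"
proof -
  define Bs where "Bs = {b\<in>F \<rightarrow>\<^sub>E (UNIV :: bool set). Q (config_graph F b)}"
  have finBs: "finite Bs"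
  proof (rule finite_subset)
    show "Bs \<subseteq> F \<rightarrow>\<^sub>E UNIV" unfolding Bs_def by blast
    show "finite (F \<rightarrow>\<^sub>E (UNIV :: bool set))" using F by (intro finite_PiE) simp_all
  qed
  have eqU: "{\<omega>. Q \<omega>} = (\<Union>b\<in>Bs. cylinder F b)"
    unfolding Bs_def by (rule finitely_determined_eq_Union_cylinder[OF dep])
  have disj: "disjoint_family_on (cylinder F) Bs"
    by (rule disjoint_family_on_mono[OF _ disjoint_family_on_cylinder]) (auto simp: Bs_def)
  show "{\<omega>. Q \<omega>} \<in> sets (perc_measure p)"
    using finBs cylinder_in_sets[OF F p] by (subst eqU) (intro sets.finite_UN, auto)
  have "measure (perc_measure p) (\<Union>b\<in>Bs. cylinder F b) = (\<Sum>b\<in>Bs. measure (perc_measure p) (cylinder F b))"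
    using finBs disj cylinder_in_sets[OF F p] emeasure_cylinder[OF F p]
    by (intro measure_finite_Union) auto
  also have "\<dots> = (\<Sum>b\<in>Bs. config_weight p F b)"
    using emeasure_cylinder[OF F p] config_weight_nonneg[OF p] by (intro sum.cong refl) (simp add: measure_def)
  finally show "measure (perc_measure p) {\<omega>. Q \<omega>} =
      (\<Sum>b\<in>{b\<in>F \<rightarrow>\<^sub>E UNIV. Q (config_graph F b)}. config_weight p F b)"
    using eqU unfolding Bs_def by simp
qed

lemma sum_config_weight_reindex:
  assumes inj: "inj_on \<sigma> F" and F': "F' = \<sigma> ` F"
    and PP: "\<And>b. b \<in> F' \<rightarrow>\<^sub>E UNIV \<Longrightarrow> P' b \<longleftrightarrow> P (restrict (b \<circ> \<sigma>) F)"
  shows "(\<Sum>b\<in>{b\<in>F' \<rightarrow>\<^sub>E UNIV. P' b}. config_weight p F' b) =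
         (\<Sum>b\<in>{b\<in>F \<rightarrow>\<^sub>E UNIV. P b}. config_weight p F b)"
proof -
  define T' where "T' = {b\<in>F' \<rightarrow>\<^sub>E (UNIV :: bool set). P' b}"
  define T where "T = {b\<in>F \<rightarrow>\<^sub>E (UNIV :: bool set). P b}"
  define h where "h b = restrict (b \<circ> \<sigma>) F" for b :: "nat \<times> nat \<Rightarrow> bool"
  define g where "g b = restrict (\<lambda>e'. b (inv_into F \<sigma> e')) F'" for b :: "nat \<times> nat \<Rightarrow> bool"
  have hg: "h (g b) = b" if "b \<in> F \<rightarrow>\<^sub>E UNIV" for b
  proof
    fix e show "h (g b) e = b e"
    proof (cases "e \<in> F")
      case True
      then show ?thesis using inj unfolding h_def g_def F' by auto
    next
      case False
      then show ?thesis using PiE_arb[OF that False] unfolding h_def by auto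
    qed
  qed
  have gh: "g (h b) = b" if "b \<in> F' \<rightarrow>\<^sub>E UNIV" for b
  proof
    fix e show "g (h b) e = b e"
    proof (cases "e \<in> F'")
      case True
      then have "inv_into F \<sigma> e \<in> F" "\<sigma> (inv_into F \<sigma> e) = e" unfolding F'
        by (auto intro: inv_into_into f_inv_into_f)
      then show ?thesis using True unfolding h_def g_def by simp
    next
      case False
      then show ?thesis using PiE_arb[OF that False] unfolding g_def by auto
    qed
  qed
  have hT: "h b \<in> F \<rightarrow>\<^sub>E UNIV" and gT: "g b \<in> F' \<rightarrow>\<^sub>E UNIV" for b unfolding h_def g_def by auto
  have bij: "bij_betw h T' T"
  proof (rule bij_betw_byWitness[where f'=g])
    show "\<forall>a\<in>T'. g (h a) = a" using gh unfolding T'_def by auto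
    show "\<forall>a'\<in>T. h (g a') = a'" using hg unfolding T_def by auto
    show "h ` T' \<subseteq> T"
    proof (rule image_subsetI)
      fix b assume "b \<in> T'"
      then have "P (h b)" using PP unfolding T'_def h_def by blast
      then show "h b \<in> T" using hT unfolding T_def by blast
    qed
    show "g ` T \<subseteq> T'"
    proof (rule image_subsetI)
      fix b assume "b \<in> T"
      then have "P (h (g b))" using hg unfolding T_def by auto
      then have "P' (g b)" using PP[OF gT[of b]] unfolding h_def by blast
      then show "g b \<in> T'" using gT unfolding T'_def by blast
    qed
  qed
  have W: "config_weight p F (h b) = config_weight p F' b" for b
  proof -
    have "config_weight p F' b = (\<Prod>e\<in>F. if b (\<sigma> e) then p else 1 - p)"
      unfolding config_weight_def F' using inj by (subst prod.reindex) auto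
    then show ?thesis unfolding config_weight_def h_def by (auto intro!: prod.cong)
  qed
  have "(\<Sum>b\<in>T'. config_weight p F' b) = (\<Sum>b\<in>T'. config_weight p F (h b))" using W by simp
  also have "\<dots> = (\<Sum>b\<in>T. config_weight p F b)" by (rule sum.reindex_bij_betw[OF bij])
  finally show ?thesis unfolding T_def T'_def .
qed

section \<open>The hitting probability of a local event\<close>

definition local_event_radius :: "nat \<Rightarrow> (rgraph \<Rightarrow> bool) \<Rightarrow> bool" where
  "local_event_radius R E \<longleftrightarrow>
     (\<forall>X Y. lf_graph (fst X) \<longrightarrow> lf_graph (fst Y) \<longrightarrow> ball_iso R X Y \<longrightarrow> (E X \<longleftrightarrow> E Y))"

lemma local_event_iff_radius: "local_event E \<longleftrightarrow> (\<exists>R. local_event_radius R E)"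
  unfolding local_event_def local_event_radius_def ..

text \<open>Positions of the retention variables of the edges inside \<open>ball G K z\<close>.\<close>
definition ball_edges :: "graph \<Rightarrow> nat \<Rightarrow> nat \<Rightarrow> (nat \<times> nat) set" where
  "ball_edges G K z = {(min u v, max u v) | u v. u \<in> ball G K z \<and> v \<in> ball G K z \<and> G u v}"

definition hit_prob :: "real \<Rightarrow> (rgraph \<Rightarrow> bool) \<Rightarrow> nat \<Rightarrow> rgraph \<Rightarrow> real" where
  "hit_prob p E r X =
     measure (perc_measure p) {\<omega>. \<exists>u\<in>ball (fst X) r (snd X). E (perc_graph (fst X) \<omega>, u)}"

lemma hit_prob_zero: "hit_prob p E 0 (G, u) = measure (perc_measure p) {\<omega>. E (perc_graph G \<omega>, u)}"
  unfolding hit_prob_def by simp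

lemma hit_prob_nonneg: "0 \<le> hit_prob p E r X"
  unfolding hit_prob_def by simp

lemma hit_prob_le_1: "hit_prob p E r X \<le> 1"
proof -
  interpret prob_space "perc_measure p" by (rule prob_space_perc_measure)
  show ?thesis unfolding hit_prob_def by (rule prob_le_1)
qed

lemma finite_ball_edges: "lf_graph G \<Longrightarrow> finite (ball_edges G K z)"
proof -
  assume "lf_graph G"
  then have "finite (ball G K z \<times> ball G K z)" using finite_ball by auto
  moreover have "ball_edges G K z \<subseteq> (\<lambda>(u, v). (min u v, max u v)) ` (ball G K z \<times> ball G K z)"
    unfolding ball_edges_def by auto
  ultimately show ?thesis using finite_subset by blast
qed

lemma min_max_eq_iff: "((min a b, max a b) = (min c d, max c d)) \<longleftrightarrow> {a, b} = {c :: nat, d}"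
  by (cases "a \<le> b"; cases "c \<le> d") (auto simp: doubleton_eq_iff min_def max_def)

lemma min_max_image:
  "(min (f (min u v)) (f (max u v)), max (f (min u v)) (f (max u v))) =
   (min (f u) (f v), max (f u) (f (v :: nat)) :: nat)"
  by (cases "u \<le> v") (auto simp: min_def max_def)

lemma ball_iso_perc_graph:
  assumes bij: "bij_betw \<phi> (ball G K z) (ball G' K z')" and z: "\<phi> z = z'"
    and adj: "\<forall>u\<in>ball G K z. \<forall>v\<in>ball G K z. G u v \<longleftrightarrow> G' (\<phi> u) (\<phi> v)"
    and agree: "\<forall>u\<in>ball G K z. \<forall>v\<in>ball G K z. G u v \<longrightarrow>
              \<omega> (min u v) (max u v) = \<omega>' (min (\<phi> u) (\<phi> v)) (max (\<phi> u) (\<phi> v))"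
    and x: "x \<in> ball G a z" and aR: "a + R \<le> K"
  shows "ball_iso R (perc_graph G \<omega>, x) (perc_graph G' \<omega>', \<phi> x)"
proof (rule ball_iso_subgraph[OF _ _ bij z adj _ x aR])
  show "\<forall>u\<in>ball G K z. \<forall>v\<in>ball G K z. perc_graph G \<omega> u v \<longleftrightarrow> perc_graph G' \<omega>' (\<phi> u) (\<phi> v)"
    using adj agree unfolding perc_graph_def by metis
qed (auto simp: perc_graph_def)

lemma hit_event_determined_by_ball_edges:
  assumes lfG: "lf_graph G" and E: "local_event_radius R E"
    and agree: "\<forall>e\<in>ball_edges G (r + R) z. \<omega> (fst e) (snd e) = \<omega>' (fst e) (snd e)"
  shows "(\<exists>u\<in>ball G r z. E (perc_graph G \<omega>, u)) \<longleftrightarrow> (\<exists>u\<in>ball G r z. E (perc_graph G \<omega>', u))"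
proof -
  have "E (perc_graph G \<omega>, u) \<longleftrightarrow> E (perc_graph G \<omega>', u)" if u: "u \<in> ball G r z" for u
  proof -
    have agree': "\<forall>u\<in>ball G (r + R) z. \<forall>v\<in>ball G (r + R) z. G u v \<longrightarrow>
              \<omega> (min u v) (max u v) = \<omega>' (min (id u) (id v)) (max (id u) (id v))"
      using agree unfolding ball_edges_def by fastforce
    have "ball_iso R (perc_graph G \<omega>, u) (perc_graph G \<omega>', id u)"
      by (rule ball_iso_perc_graph[OF _ _ _ agree' u]) (auto simp: bij_betw_def inj_on_def)
    then show ?thesis using E lf_graph_perc_graph[OF lfG] unfolding local_event_radius_def by auto
  qed
  then show ?thesis by auto
qed

lemma hit_prob_eq_sum:
  assumes lfG: "lf_graph G" and E: "local_event_radius R E" and p: "0 \<le> p" "p \<le> 1"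
  shows "hit_prob p E r (G, z) =
    (\<Sum>b\<in>{b\<in>ball_edges G (r + R) z \<rightarrow>\<^sub>E UNIV.
        \<exists>u\<in>ball G r z. E (perc_graph G (config_graph (ball_edges G (r + R) z) b), u)}.
      config_weight p (ball_edges G (r + R) z) b)"
  unfolding hit_prob_def fst_conv snd_conv
  by (rule measure_finitely_determined[OF finite_ball_edges[OF lfG] p])
    (rule hit_event_determined_by_ball_edges[OF lfG E])

lemma hit_event_in_sets:
  assumes lf: "lf_graph G" and E: "local_event_radius R E" and p: "0 \<le> p" "p \<le> 1"
  shows "{\<omega>. E (perc_graph G \<omega>, u)} \<in> sets (perc_measure p)"
proof -
  have "{\<omega>. \<exists>u'\<in>ball G 0 u. E (perc_graph G \<omega>, u')} \<in> sets (perc_measure p)"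
    by (rule finitely_determined_in_sets[OF finite_ball_edges[OF lf] p])
      (rule hit_event_determined_by_ball_edges[OF lf E])
  then show ?thesis by simp
qed

lemma ball_edges_iso:
  assumes bij: "bij_betw \<phi> (ball G K z) (ball G' K z')"
    and adj: "\<forall>u\<in>ball G K z. \<forall>v\<in>ball G K z. G u v \<longleftrightarrow> G' (\<phi> u) (\<phi> v)"
  defines "\<sigma> \<equiv> \<lambda>e. (min (\<phi> (fst e)) (\<phi> (snd e)), max (\<phi> (fst e)) (\<phi> (snd e)))"
  shows "inj_on \<sigma> (ball_edges G K z)" "ball_edges G' K z' = \<sigma> ` ball_edges G K z"
proof -
  have injB: "inj_on \<phi> (ball G K z)" using bij bij_betw_imp_inj_on by blast
  have imB: "\<phi> ` ball G K z = ball G' K z'" using bij bij_betw_imp_surj_on by blast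
  have sig: "\<sigma> (min u v, max u v) = (min (\<phi> u) (\<phi> v), max (\<phi> u) (\<phi> v))" for u v
    unfolding \<sigma>_def using min_max_image[of \<phi> u v] by simp
  show "inj_on \<sigma> (ball_edges G K z)"
  proof (rule inj_onI)
    fix e1 e2 assume e: "e1 \<in> ball_edges G K z" "e2 \<in> ball_edges G K z" "\<sigma> e1 = \<sigma> e2"
    from e(1) obtain u1 v1
      where 1: "e1 = (min u1 v1, max u1 v1)" "u1 \<in> ball G K z" "v1 \<in> ball G K z"
      unfolding ball_edges_def by auto
    from e(2) obtain u2 v2
      where 2: "e2 = (min u2 v2, max u2 v2)" "u2 \<in> ball G K z" "v2 \<in> ball G K z"
      unfolding ball_edges_def by auto
    have "{\<phi> u1, \<phi> v1} = {\<phi> u2, \<phi> v2}" using e(3) unfolding 1 2 sig min_max_eq_iff .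
    then have "{u1, v1} = {u2, v2}" using injB 1 2 unfolding doubleton_eq_iff inj_on_def by metis
    then show "e1 = e2" unfolding 1 2 min_max_eq_iff .
  qed
  show "ball_edges G' K z' = \<sigma> ` ball_edges G K z"
  proof (intro equalityI subsetI)
    fix e' assume "e' \<in> ball_edges G' K z'"
    then obtain u' v' where e': "e' = (min u' v', max u' v')" "u' \<in> ball G' K z'" "v' \<in> ball G' K z'"
        "G' u' v'"
      unfolding ball_edges_def by auto
    then obtain u v where uv: "u \<in> ball G K z" "v \<in> ball G K z" "u' = \<phi> u" "v' = \<phi> v"
      using imB by blast
    then have "(min u v, max u v) \<in> ball_edges G K z"
      using adj e' unfolding ball_edges_def by auto
    moreover have "e' = \<sigma> (min u v, max u v)" using sig e' uv by simp
    ultimately show "e' \<in> \<sigma> ` ball_edges G K z" by auto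
  next
    fix e' assume "e' \<in> \<sigma> ` ball_edges G K z"
    then obtain u v where uv: "u \<in> ball G K z" "v \<in> ball G K z" "G u v" "e' = \<sigma> (min u v, max u v)"
      unfolding ball_edges_def by auto
    then have "G' (\<phi> u) (\<phi> v)" "\<phi> u \<in> ball G' K z'" "\<phi> v \<in> ball G' K z'" using adj imB by auto
    then show "e' \<in> ball_edges G' K z'" unfolding ball_edges_def uv(4) sig by auto
  qed
qed

lemma hit_event_ball_iso:
  assumes lfG: "lf_graph G" and lfG': "lf_graph G'" and E: "local_event_radius R E"
    and bij: "bij_betw \<phi> (ball G (r + R) z) (ball G' (r + R) z')" and z: "\<phi> z = z'"
    and adj: "\<forall>u\<in>ball G (r + R) z. \<forall>v\<in>ball G (r + R) z. G u v \<longleftrightarrow> G' (\<phi> u) (\<phi> v)"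
    and agree: "\<forall>u\<in>ball G (r + R) z. \<forall>v\<in>ball G (r + R) z. G u v \<longrightarrow>
              \<omega> (min u v) (max u v) = \<omega>' (min (\<phi> u) (\<phi> v)) (max (\<phi> u) (\<phi> v))"
  shows "(\<exists>u'\<in>ball G' r z'. E (perc_graph G' \<omega>', u')) \<longleftrightarrow> (\<exists>u\<in>ball G r z. E (perc_graph G \<omega>, u))"
proof -
  have iff: "E (perc_graph G \<omega>, u) \<longleftrightarrow> E (perc_graph G' \<omega>', \<phi> u)" if u: "u \<in> ball G r z" for u
  proof -
    have "ball_iso R (perc_graph G \<omega>, u) (perc_graph G' \<omega>', \<phi> u)"
      by (rule ball_iso_perc_graph[OF bij z adj agree u]) simp
    then show ?thesis
      using E lf_graph_perc_graph[OF lfG] lf_graph_perc_graph[OF lfG'] unfolding local_event_radius_def by auto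
  qed
  have img: "\<phi> ` ball G r z = ball G' r z'"
    by (rule ball_iso_image_ball[OF bij z adj]) simp
  have "(\<exists>u'\<in>ball G' r z'. E (perc_graph G' \<omega>', u')) \<longleftrightarrow>
      (\<exists>u\<in>ball G r z. E (perc_graph G' \<omega>', \<phi> u))"
    unfolding img[symmetric] by blast
  then show ?thesis using iff by auto
qed

lemma hit_prob_ball_iso:
  assumes lfG: "lf_graph G" and lfG': "lf_graph G'" and E: "local_event_radius R E"
    and p: "0 \<le> p" "p \<le> 1" and iso: "ball_iso (r + R) (G, z) (G', z')"
  shows "hit_prob p E r (G, z) = hit_prob p E r (G', z')"
proof -
  define K where "K = r + R"
  from iso obtain \<phi> where bij: "bij_betw \<phi> (ball G K z) (ball G' K z')" and z: "\<phi> z = z'"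
    and adj: "\<forall>u\<in>ball G K z. \<forall>v\<in>ball G K z. G u v \<longleftrightarrow> G' (\<phi> u) (\<phi> v)"
    unfolding ball_iso_def K_def by auto
  define F where "F = ball_edges G K z"
  define F' where "F' = ball_edges G' K z'"
  define \<sigma> where "\<sigma> e = (min (\<phi> (fst e)) (\<phi> (snd e)), max (\<phi> (fst e)) (\<phi> (snd e)))" for e
  have inj: "inj_on \<sigma> F" and F': "F' = \<sigma> ` F"
    using ball_edges_iso[OF bij adj] unfolding F_def F'_def \<sigma>_def by auto
  have agree: "\<forall>u\<in>ball G K z. \<forall>v\<in>ball G K z. G u v \<longrightarrow>
      config_graph F (restrict (b \<circ> \<sigma>) F) (min u v) (max u v) =
      config_graph F' b (min (\<phi> u) (\<phi> v)) (max (\<phi> u) (\<phi> v))" for b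
  proof (intro ballI impI)
    fix u v assume "u \<in> ball G K z" "v \<in> ball G K z" "G u v"
    then have inF: "(min u v, max u v) \<in> F" unfolding F_def ball_edges_def by auto
    then have "\<sigma> (min u v, max u v) \<in> F'" using F' by auto
    then show "config_graph F (restrict (b \<circ> \<sigma>) F) (min u v) (max u v) =
        config_graph F' b (min (\<phi> u) (\<phi> v)) (max (\<phi> u) (\<phi> v))"
      using inF unfolding config_graph_def \<sigma>_def by (simp add: min_max_image)
  qed
  have "hit_prob p E r (G', z') = (\<Sum>b\<in>{b\<in>F' \<rightarrow>\<^sub>E UNIV.
            \<exists>u\<in>ball G' r z'. E (perc_graph G' (config_graph F' b), u)}. config_weight p F' b)"
    unfolding F'_def K_def by (rule hit_prob_eq_sum[OF lfG' E p])
  also have "\<dots> = (\<Sum>b\<in>{b\<in>F \<rightarrow>\<^sub>E UNIV.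
            \<exists>u\<in>ball G r z. E (perc_graph G (config_graph F b), u)}. config_weight p F b)"
    using hit_event_ball_iso[OF lfG lfG' E bij[unfolded K_def] z adj[unfolded K_def] agree[unfolded K_def]]
    by (intro sum_config_weight_reindex[OF inj F'])
  also have "\<dots> = hit_prob p E r (G, z)"
    unfolding F_def K_def by (rule hit_prob_eq_sum[OF lfG E p, symmetric])
  finally show ?thesis by simp
qed

section \<open>Measurability\<close>

definition graph_space :: "rgraph measure" where
  "graph_space = (\<Pi>\<^sub>M u\<in>UNIV. \<Pi>\<^sub>M v\<in>UNIV. count_space UNIV) \<Otimes>\<^sub>M count_space UNIV"

lemma rg_space_eq_restrict_graph_space: "rg_space = restrict_space graph_space {X. lf_graph (fst X)}"
  unfolding rg_space_def graph_space_def ..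

lemma space_rg_space: "space rg_space = {X. lf_graph (fst X)}"
  unfolding rg_space_def
  by (simp add: space_restrict_space space_pair_measure space_PiM PiE_def extensional_def)

lemma pred_constant: "Measurable.pred M (\<lambda>_. c)"
  unfolding pred_def by (cases c) auto

lemma pred_graph_space_adj: "Measurable.pred graph_space (\<lambda>Z. fst Z (a :: nat) (b :: nat))"
proof -
  have 1: "fst \<in> graph_space \<rightarrow>\<^sub>M (\<Pi>\<^sub>M u\<in>UNIV. \<Pi>\<^sub>M v\<in>UNIV. count_space (UNIV :: bool set))"
    unfolding graph_space_def by (rule measurable_fst)
  have 2: "(\<lambda>g. g a) \<in> (\<Pi>\<^sub>M u\<in>UNIV. \<Pi>\<^sub>M v\<in>UNIV. count_space (UNIV :: bool set))
      \<rightarrow>\<^sub>M (\<Pi>\<^sub>M v\<in>UNIV. count_space (UNIV :: bool set))"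
    by (rule measurable_component_singleton) simp
  have 3: "(\<lambda>f. f b) \<in> (\<Pi>\<^sub>M v\<in>UNIV. count_space (UNIV :: bool set)) \<rightarrow>\<^sub>M count_space UNIV"
    by (rule measurable_component_singleton) simp
  show ?thesis unfolding pred_def using measurable_compose[OF measurable_compose[OF 1 2] 3] by simp
qed

lemma pred_graph_space_root: "Measurable.pred graph_space (\<lambda>Z. snd Z = (x :: nat))"
proof -
  have "snd \<in> graph_space \<rightarrow>\<^sub>M count_space (UNIV :: nat set)"
    unfolding graph_space_def by (rule measurable_snd)
  moreover have "(\<lambda>y. y = x) \<in> count_space (UNIV :: nat set) \<rightarrow>\<^sub>M count_space UNIV" by simp
  ultimately show ?thesis unfolding pred_def using measurable_compose by fastforce
qed

lemma pred_graph_space_relpowp: "Measurable.pred graph_space (\<lambda>Z. (fst Z ^^ k) (x :: nat) (v :: nat))"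
proof (induction k arbitrary: v)
  case 0
  show ?case by (simp add: pred_constant)
next
  case (Suc k)
  have "Measurable.pred graph_space (\<lambda>Z. \<exists>w. (fst Z ^^ k) x w \<and> fst Z w v)"
    by (intro pred_intros_countable(2) pred_intros_logic(3) Suc.IH pred_graph_space_adj)
  then show ?case by (simp add: relcompp_apply)
qed

lemma pred_graph_space_in_ball: "Measurable.pred graph_space (\<lambda>Z. (v :: nat) \<in> ball (fst Z) R (snd Z))"
proof -
  have "(\<lambda>Z. v \<in> ball (fst Z) R (snd Z)) = (\<lambda>Z. \<exists>x. snd Z = x \<and> (\<exists>k\<in>{..R}. (fst Z ^^ k) x v))"
    unfolding ball_def by auto
  moreover have "Measurable.pred graph_space (\<lambda>Z. \<exists>x. snd Z = x \<and> (\<exists>k\<in>{..R}. (fst Z ^^ k) x v))"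
    by (intro pred_intros_countable(2) pred_intros_logic(3) pred_graph_space_root
        pred_intros_finite(4) pred_graph_space_relpowp) auto
  ultimately show ?thesis by simp
qed

lemma lf_graph_iff_eventually_not_adj:
  "lf_graph G \<longleftrightarrow> (\<forall>u v. G u v = G v u) \<and> (\<forall>u. \<not> G u u) \<and> (\<forall>u. \<exists>N. \<forall>v. N \<le> v \<longrightarrow> \<not> G u v)"
proof -
  have "finite {v. G u v} \<longleftrightarrow> (\<exists>N. \<forall>v. N \<le> v \<longrightarrow> \<not> G u v)" for u
    unfolding finite_nat_set_iff_bounded by (auto simp: not_le[symmetric])
  then show ?thesis unfolding lf_graph_def by blast
qed

lemma pred_graph_space_lf_graph: "Measurable.pred graph_space (\<lambda>Z. lf_graph (fst Z))"
  unfolding lf_graph_iff_eventually_not_adj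
  by (intro pred_intros_logic(3) pred_intros_countable pred_intros_logic(6) pred_intros_logic(2)
      pred_intros_logic(4) pred_graph_space_adj pred_constant)

text \<open>
  A local event is a countable union of level sets of the key: equal keys make the
  identity a rooted isomorphism of \<open>R\<close>-balls, and there are only countably many keys.
\<close>
definition ball_key :: "nat \<Rightarrow> rgraph \<Rightarrow> nat set \<times> graph \<times> nat" where
  "ball_key R Z = (ball (fst Z) R (snd Z),
     \<lambda>a b. a \<in> ball (fst Z) R (snd Z) \<and> b \<in> ball (fst Z) R (snd Z) \<and> fst Z a b, snd Z)"

lemma pred_graph_space_ball_key: "Measurable.pred graph_space (\<lambda>Z. ball_key R Z = k)"
proof -
  obtain S A x where k: "k = (S, A, x)" by (cases k) auto
  have "(\<lambda>Z. ball_key R Z = k) = (\<lambda>Z. (\<forall>v. (v \<in> ball (fst Z) R (snd Z)) = (v \<in> S)) \<and>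
      (\<forall>a b. (a \<in> ball (fst Z) R (snd Z) \<and> b \<in> ball (fst Z) R (snd Z) \<and> fst Z a b) = A a b) \<and>
      snd Z = x)"
    unfolding ball_key_def k by (auto simp: fun_eq_iff set_eq_iff)
  moreover have "Measurable.pred graph_space (\<lambda>Z. (\<forall>v. (v \<in> ball (fst Z) R (snd Z)) = (v \<in> S)) \<and>
      (\<forall>a b. (a \<in> ball (fst Z) R (snd Z) \<and> b \<in> ball (fst Z) R (snd Z) \<and> fst Z a b) = A a b) \<and>
      snd Z = x)"
    by (intro pred_intros_logic(3) pred_intros_countable pred_intros_logic(6) pred_graph_space_in_ball
        pred_constant pred_graph_space_adj pred_graph_space_root)
  ultimately show ?thesis by simp
qed

lemma countable_ball_keys: "countable (ball_key R ` {Z. lf_graph (fst Z)})"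
proof -
  define K0 where "K0 = (\<lambda>(S, P, x). (S, \<lambda>a b. (a, b) \<in> P, x)) `
    ((Collect finite :: nat set set) \<times> (Collect finite :: (nat \<times> nat) set set) \<times> (UNIV :: nat set))"
  have "countable K0" unfolding K0_def
    by (intro countable_image countable_SIGMA countable_Collect_finite) auto
  moreover have "ball_key R ` {Z. lf_graph (fst Z)} \<subseteq> K0"
  proof
    fix k assume "k \<in> ball_key R ` {Z. lf_graph (fst Z)}"
    then obtain Z where Z: "lf_graph (fst Z)" "k = ball_key R Z" by auto
    define S where "S = ball (fst Z) R (snd Z)"
    define P where "P = {(a, b). a \<in> S \<and> b \<in> S \<and> fst Z a b}"
    have fS: "finite S" unfolding S_def using finite_ball[OF Z(1)] .
    have "finite P" using fS by (intro finite_subset[of P "S \<times> S"]) (auto simp: P_def)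
    moreover have "k = (\<lambda>(S, P, x). (S, \<lambda>a b. (a, b) \<in> P, x)) (S, P, snd Z)"
      unfolding Z(2) ball_key_def S_def P_def by simp
    ultimately show "k \<in> K0" unfolding K0_def using fS by blast
  qed
  ultimately show ?thesis using countable_subset by blast
qed

lemma ball_key_eq_imp_ball_iso:
  assumes "ball_key R Z = ball_key R Z'"
  shows "ball_iso R Z Z'"
  unfolding ball_iso_def
proof (intro exI[of _ id] conjI)
  note eq = assms[unfolded ball_key_def prod.inject]
  have adj: "(a \<in> ball (fst Z) R (snd Z) \<and> b \<in> ball (fst Z) R (snd Z) \<and> fst Z a b) =
             (a \<in> ball (fst Z') R (snd Z') \<and> b \<in> ball (fst Z') R (snd Z') \<and> fst Z' a b)" for a b
    using fun_cong[OF fun_cong[OF eq[THEN conjunct2, THEN conjunct1], of a], of b] by (simp only:)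
  show "bij_betw id (ball (fst Z) R (snd Z)) (ball (fst Z') R (snd Z'))"
    unfolding eq[THEN conjunct1] by simp
  show "id (snd Z) = snd Z'" using eq by simp
  show "\<forall>u\<in>ball (fst Z) R (snd Z). \<forall>v\<in>ball (fst Z) R (snd Z). fst Z u v = fst Z' (id u) (id v)"
    using adj eq[THEN conjunct1] by auto
qed

lemma pred_graph_space_local_event:
  assumes E: "local_event_radius R E"
  shows "Measurable.pred graph_space (\<lambda>Z. lf_graph (fst Z) \<and> E Z)"
proof -
  define KS where "KS = ball_key R ` {Z. lf_graph (fst Z) \<and> E Z}"
  have "KS \<subseteq> ball_key R ` {Z. lf_graph (fst Z)}" unfolding KS_def by auto
  then have cKS: "countable KS" using countable_ball_keys[of R] by (rule countable_subset)
  have eq: "(lf_graph (fst Z) \<and> E Z) \<longleftrightarrow> (lf_graph (fst Z) \<and> (\<exists>k\<in>KS. ball_key R Z = k))" for Z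
  proof
    assume "lf_graph (fst Z) \<and> (\<exists>k\<in>KS. ball_key R Z = k)"
    then obtain Z0 where "lf_graph (fst Z)" "lf_graph (fst Z0)" "E Z0" "ball_key R Z0 = ball_key R Z"
      unfolding KS_def by (auto simp: image_iff)
    then show "lf_graph (fst Z) \<and> E Z"
      using E ball_key_eq_imp_ball_iso unfolding local_event_radius_def by blast
  qed (auto simp: KS_def)
  have "{Z \<in> space graph_space. lf_graph (fst Z) \<and> (\<exists>k\<in>KS. ball_key R Z = k)} =
        {Z \<in> space graph_space. lf_graph (fst Z)} \<inter> (\<Union>k\<in>KS. {Z \<in> space graph_space. ball_key R Z = k})"
    by auto
  also have "\<dots> \<in> sets graph_space"
    using pred_graph_space_lf_graph pred_graph_space_ball_key cKS unfolding pred_def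
    by (intro sets.Int sets.countable_UN') auto
  finally show ?thesis unfolding pred_def eq .
qed

lemma measurable_rg_space_graph_space: "(\<lambda>x. x) \<in> rg_space \<rightarrow>\<^sub>M graph_space"
  unfolding rg_space_eq_restrict_graph_space
  by (intro measurable_restrict_space1 measurable_ident_sets) simp

lemma measurable_fst_graph_space: "fst \<in> (rg_space \<Otimes>\<^sub>M N) \<rightarrow>\<^sub>M graph_space"
  by (rule measurable_compose[OF measurable_fst measurable_rg_space_graph_space])

lemma pred_retention_var:
  "Measurable.pred (rg_space \<Otimes>\<^sub>M perc_measure p) (\<lambda>z. snd z (a :: nat) (b :: nat))"
proof -
  have 1: "snd \<in> (rg_space \<Otimes>\<^sub>M perc_measure p) \<rightarrow>\<^sub>M perc_measure p" by (rule measurable_snd)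
  have 2: "(\<lambda>g. g a) \<in> perc_measure p \<rightarrow>\<^sub>M (\<Pi>\<^sub>M v\<in>UNIV. measure_pmf (bernoulli_pmf p))"
    unfolding perc_measure_def by (rule measurable_component_singleton) simp
  have 3: "(\<lambda>f. f b) \<in> (\<Pi>\<^sub>M v\<in>UNIV. measure_pmf (bernoulli_pmf p)) \<rightarrow>\<^sub>M measure_pmf (bernoulli_pmf p)"
    by (rule measurable_component_singleton) simp
  have 4: "(\<lambda>x. x) \<in> measure_pmf (bernoulli_pmf p) \<rightarrow>\<^sub>M count_space (UNIV :: bool set)" by simp
  show ?thesis unfolding pred_def
    using measurable_compose[OF measurable_compose[OF measurable_compose[OF 1 2] 3] 4] by simp
qed

lemma measurable_perc_graph:
  "(\<lambda>z. perc_graph (fst (fst z)) (snd z)) \<in>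
     (rg_space \<Otimes>\<^sub>M perc_measure p) \<rightarrow>\<^sub>M (\<Pi>\<^sub>M u\<in>UNIV. \<Pi>\<^sub>M v\<in>UNIV. count_space UNIV)"
proof -
  have coord: "Measurable.pred (rg_space \<Otimes>\<^sub>M perc_measure p)
      (\<lambda>z. fst (fst z) u v \<and> snd z (min u v) (max u v))" for u v
    by (intro pred_intros_logic(3) pred_retention_var
        measurable_compose[OF measurable_fst_graph_space pred_graph_space_adj])
  have row: "(\<lambda>z v. fst (fst z) u v \<and> snd z (min u v) (max u v)) \<in>
      (rg_space \<Otimes>\<^sub>M perc_measure p) \<rightarrow>\<^sub>M (\<Pi>\<^sub>M v\<in>UNIV. count_space UNIV)" for u
    by (rule measurable_PiM_single'[OF coord]) (auto simp: space_PiM)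
  have "(\<lambda>z u v. fst (fst z) u v \<and> snd z (min u v) (max u v)) \<in>
      (rg_space \<Otimes>\<^sub>M perc_measure p) \<rightarrow>\<^sub>M (\<Pi>\<^sub>M u\<in>UNIV. \<Pi>\<^sub>M v\<in>UNIV. count_space UNIV)"
    by (rule measurable_PiM_single'[OF row]) (auto simp: space_PiM PiE_def extensional_def)
  then show ?thesis unfolding perc_graph_def .
qed

lemma hit_event_in_sets_pair:
  assumes E: "local_event_radius R E"
  shows "{z \<in> space (rg_space \<Otimes>\<^sub>M perc_measure p).
          \<exists>u\<in>ball (fst (fst z)) r (snd (fst z)). E (perc_graph (fst (fst z)) (snd z), u)}
       \<in> sets (rg_space \<Otimes>\<^sub>M perc_measure p)"
proof -
  let ?M = "rg_space \<Otimes>\<^sub>M perc_measure p"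
  have rooted: "(\<lambda>z. (perc_graph (fst (fst z)) (snd z), u)) \<in> ?M \<rightarrow>\<^sub>M graph_space" for u
    unfolding graph_space_def by (intro measurable_Pair measurable_perc_graph) simp
  have "Measurable.pred ?M (\<lambda>z. \<exists>u. u \<in> ball (fst (fst z)) r (snd (fst z)) \<and>
       (lf_graph (fst (perc_graph (fst (fst z)) (snd z), u)) \<and> E (perc_graph (fst (fst z)) (snd z), u)))"
    by (intro pred_intros_countable(2) pred_intros_logic(3)
        measurable_compose[OF measurable_fst_graph_space pred_graph_space_in_ball]
        measurable_compose[OF rooted pred_graph_space_local_event[OF E]])
  then have in_sets: "{z\<in>space ?M. \<exists>u. u \<in> ball (fst (fst z)) r (snd (fst z)) \<and>
       (lf_graph (fst (perc_graph (fst (fst z)) (snd z), u)) \<and> E (perc_graph (fst (fst z)) (snd z), u))}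
       \<in> sets ?M"
    unfolding pred_def .
  have "lf_graph (fst (fst z))" if "z \<in> space ?M" for z
    using that by (auto simp: space_pair_measure space_rg_space)
  then have "{z \<in> space ?M. \<exists>u\<in>ball (fst (fst z)) r (snd (fst z)). E (perc_graph (fst (fst z)) (snd z), u)} =
    {z\<in>space ?M. \<exists>u. u \<in> ball (fst (fst z)) r (snd (fst z)) \<and>
       (lf_graph (fst (perc_graph (fst (fst z)) (snd z), u)) \<and> E (perc_graph (fst (fst z)) (snd z), u))}"
    using lf_graph_perc_graph by auto
  then show ?thesis using in_sets by simp
qed

section \<open>Integrals against the local limit\<close>

lemma measure_pair_eq_integral:
  assumes M: "prob_space M" and N: "prob_space N" and spN: "space N = UNIV"
    and S: "{z \<in> space (M \<Otimes>\<^sub>M N). Q (fst z) (snd z)} \<in> sets (M \<Otimes>\<^sub>M N)"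
  shows "measure (M \<Otimes>\<^sub>M N) {z \<in> space (M \<Otimes>\<^sub>M N). Q (fst z) (snd z)} =
    (\<integral>x. measure N {\<omega>. Q x \<omega>} \<partial>M)"
proof -
  interpret N: prob_space N by fact
  let ?S = "{z \<in> space (M \<Otimes>\<^sub>M N). Q (fst z) (snd z)}"
  have sec: "Pair x -` ?S = {\<omega>. Q x \<omega>}" if "x \<in> space M" for x
    using that by (auto simp: space_pair_measure spN)
  have "measure (M \<Otimes>\<^sub>M N) ?S = enn2real (\<integral>\<^sup>+x. emeasure N (Pair x -` ?S) \<partial>M)"
    unfolding measure_def using N.emeasure_pair_measure_alt[OF S] by simp
  also have "\<dots> = (\<integral>x. measure N {\<omega>. Q x \<omega>} \<partial>M)"
  proof (rule enn2real_nn_integral_eq_integral)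
    show "AE x in M. emeasure N (Pair x -` ?S) = ennreal (measure N {\<omega>. Q x \<omega>})"
      using sec by (auto simp: N.emeasure_eq_measure)
    show "AE x in M. 0 \<le> measure N {\<omega>. Q x \<omega>}" by simp
    have "(\<lambda>x. enn2real (emeasure N (Pair x -` ?S))) \<in> M \<rightarrow>\<^sub>M borel"
      using N.measurable_emeasure_Pair[OF S] by measurable
    then show "(\<lambda>x. measure N {\<omega>. Q x \<omega>}) \<in> M \<rightarrow>\<^sub>M borel"
      by (rule measurable_cong[THEN iffD1, rotated]) (auto simp: measure_def space_pair_measure spN)
  qed
  finally show ?thesis .
qed

lemma measure_hit_event_eq_integral:
  assumes prob: "prob_space \<mu>" and sets: "sets \<mu> = sets rg_space" and E: "local_event_radius R E"
  shows "measure (\<mu> \<Otimes>\<^sub>M perc_measure p)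
      {z \<in> space (\<mu> \<Otimes>\<^sub>M perc_measure p).
         \<exists>u\<in>ball (fst (fst z)) r (snd (fst z)). E (perc_graph (fst (fst z)) (snd z), u)}
    = integral\<^sup>L \<mu> (hit_prob p E r)"
proof -
  have sets_eq: "sets (\<mu> \<Otimes>\<^sub>M perc_measure p) = sets (rg_space \<Otimes>\<^sub>M perc_measure p)"
    using sets by (rule sets_pair_measure_cong) simp
  note space_eq = sets_eq_imp_space_eq[OF sets_eq]
  show ?thesis
    using measure_pair_eq_integral[OF prob prob_space_perc_measure[of p] space_perc_measure,
        where Q = "\<lambda>X \<omega>. \<exists>u\<in>ball (fst X) r (snd X). E (perc_graph (fst X) \<omega>, u)"]
      hit_event_in_sets_pair[OF E, of p r]
    unfolding sets_eq space_eq hit_prob_def by simp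
qed

lemma
  assumes E: "local_event_radius R E" and p: "0 \<le> p" "p \<le> 1"
  shows locally_continuous_hit_prob: "locally_continuous (hit_prob p E r)"
    and bounded_on_lf_hit_prob: "bounded_on_lf (hit_prob p E r)"
proof -
  show "locally_continuous (hit_prob p E r)" unfolding locally_continuous_def
  proof (intro allI impI exI[of _ "r + R"])
    fix X Y :: rgraph and \<epsilon> :: real
    assume "lf_graph (fst X)" "0 < \<epsilon>" "lf_graph (fst Y)" "ball_iso (r + R) X Y"
    then have "hit_prob p E r (fst X, snd X) = hit_prob p E r (fst Y, snd Y)"
      by (intro hit_prob_ball_iso[OF _ _ E p]) auto
    then show "\<bar>hit_prob p E r X - hit_prob p E r Y\<bar> < \<epsilon>" using \<open>0 < \<epsilon>\<close> by simp
  qed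
  show "bounded_on_lf (hit_prob p E r)" unfolding bounded_on_lf_def
    using hit_prob_nonneg hit_prob_le_1 by (intro exI[of _ 1]) (auto simp: abs_le_iff intro: order_trans[of _ 0])
qed

definition large_ball_indicator :: "nat \<Rightarrow> nat \<Rightarrow> rgraph \<Rightarrow> real" where
  "large_ball_indicator K M X = (if M < card (ball (fst X) K (snd X)) then 1 else 0)"

lemma locally_continuous_large_ball_indicator: "locally_continuous (large_ball_indicator K M)"
  unfolding locally_continuous_def
proof (intro allI impI exI[of _ K])
  fix X Y :: rgraph and \<epsilon> :: real
  assume "0 < \<epsilon>" "ball_iso K X Y"
  then obtain \<phi> where "bij_betw \<phi> (ball (fst X) K (snd X)) (ball (fst Y) K (snd Y))"
    unfolding ball_iso_def by auto
  then have "card (ball (fst X) K (snd X)) = card (ball (fst Y) K (snd Y))" by (rule bij_betw_same_card)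
  then show "\<bar>large_ball_indicator K M X - large_ball_indicator K M Y\<bar> < \<epsilon>"
    using \<open>0 < \<epsilon>\<close> unfolding large_ball_indicator_def by simp
qed

lemma bounded_on_lf_large_ball_indicator: "bounded_on_lf (large_ball_indicator K M)"
  unfolding bounded_on_lf_def large_ball_indicator_def by (intro exI[of _ 1]) auto

lemma borel_measurable_large_ball_indicator: "large_ball_indicator K M \<in> borel_measurable rg_space"
proof -
  define SS where "SS = {S :: nat set. finite S \<and> card S = Suc M}"
  have cSS: "countable SS" unfolding SS_def
    by (rule countable_subset[OF _ countable_Collect_finite]) auto
  have eq: "{X \<in> space rg_space. M < card (ball (fst X) K (snd X))} =
        (\<Union>S\<in>SS. {X \<in> space rg_space. \<forall>v\<in>S. v \<in> ball (fst X) K (snd X)})"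
  proof (intro equalityI subsetI)
    fix X assume X: "X \<in> {X \<in> space rg_space. M < card (ball (fst X) K (snd X))}"
    then have "Suc M \<le> card (ball (fst X) K (snd X))" by auto
    then obtain T where "T \<subseteq> ball (fst X) K (snd X)" "card T = Suc M" "finite T"
      by (rule obtain_subset_with_card_n)
    then show "X \<in> (\<Union>S\<in>SS. {X \<in> space rg_space. \<forall>v\<in>S. v \<in> ball (fst X) K (snd X)})"
      using X unfolding SS_def by auto
  next
    fix X assume "X \<in> (\<Union>S\<in>SS. {X \<in> space rg_space. \<forall>v\<in>S. v \<in> ball (fst X) K (snd X)})"
    then obtain S where S: "S \<in> SS" "X \<in> space rg_space" "S \<subseteq> ball (fst X) K (snd X)" by auto
    have "finite (ball (fst X) K (snd X))" using S(2) finite_ball by (auto simp: space_rg_space)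
    then have "card S \<le> card (ball (fst X) K (snd X))" using S(3) by (rule card_mono)
    then show "X \<in> {X \<in> space rg_space. M < card (ball (fst X) K (snd X))}"
      using S unfolding SS_def by auto
  qed
  have "Measurable.pred rg_space (\<lambda>X. \<forall>v\<in>S. v \<in> ball (fst X) K (snd X))" if "S \<in> SS" for S
    using that unfolding SS_def
    by (intro pred_intros_finite(3)
        measurable_compose[OF measurable_rg_space_graph_space pred_graph_space_in_ball]) auto
  then have "(\<Union>S\<in>SS. {X \<in> space rg_space. \<forall>v\<in>S. v \<in> ball (fst X) K (snd X)}) \<in> sets rg_space"
    using cSS by (intro sets.countable_UN') (auto simp: pred_def)
  then have "Measurable.pred rg_space (\<lambda>X. M < card (ball (fst X) K (snd X)))"
    unfolding pred_def eq .
  then show ?thesis unfolding large_ball_indicator_def by measurable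
qed

lemma integral_large_ball_indicator_tendsto_0:
  assumes prob: "prob_space \<mu>" and sets: "sets \<mu> = sets rg_space"
  shows "(\<lambda>M. integral\<^sup>L \<mu> (large_ball_indicator K M)) \<longlonglongrightarrow> 0"
proof -
  interpret prob_space \<mu> by fact
  have "(\<lambda>M. integral\<^sup>L \<mu> (large_ball_indicator K M)) \<longlonglongrightarrow> integral\<^sup>L \<mu> (\<lambda>_. 0 :: real)"
  proof (rule integral_dominated_convergence[where w="\<lambda>_. 1"])
    show "large_ball_indicator K M \<in> borel_measurable \<mu>" for M
      using borel_measurable_large_ball_indicator measurable_cong_sets[OF sets refl] by blast
    show "AE x in \<mu>. norm (large_ball_indicator K M x) \<le> 1" for M
      unfolding large_ball_indicator_def by simp
    have "(\<lambda>M. large_ball_indicator K M x) \<longlonglongrightarrow> 0" if x: "x \<in> space \<mu>" for x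
    proof -
      have "lf_graph (fst x)" using x sets_eq_imp_space_eq[OF sets] by (auto simp: space_rg_space)
      then have "eventually (\<lambda>M. large_ball_indicator K M x = 0) sequentially"
        unfolding large_ball_indicator_def eventually_sequentially
        by (intro exI[of _ "card (ball (fst x) K (snd x))"]) auto
      then show ?thesis by (rule tendsto_eventually)
    qed
    then show "AE x in \<mu>. (\<lambda>M. large_ball_indicator K M x) \<longlonglongrightarrow> 0" by auto
  qed auto
  then show ?thesis by simp
qed

section \<open>The counting argument on finite graphs\<close>

lemma hit_prob_le_sum_hit_prob_zero:
  assumes lf: "lf_graph G" and E: "local_event_radius R E" and p: "0 \<le> p" "p \<le> 1"
  shows "hit_prob p E r (G, v) \<le> (\<Sum>u\<in>ball G r v. hit_prob p E 0 (G, u))"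
proof -
  interpret prob_space "perc_measure p" by (rule prob_space_perc_measure)
  have "{\<omega>. \<exists>u\<in>ball G r v. E (perc_graph G \<omega>, u)} = (\<Union>u\<in>ball G r v. {\<omega>. E (perc_graph G \<omega>, u)})"
    by auto
  then have "hit_prob p E r (G, v) = prob (\<Union>u\<in>ball G r v. {\<omega>. E (perc_graph G \<omega>, u)})"
    unfolding hit_prob_def by simp
  also have "\<dots> \<le> (\<Sum>u\<in>ball G r v. prob {\<omega>. E (perc_graph G \<omega>, u)})"
    using finite_ball[OF lf] hit_event_in_sets[OF lf E p] by (intro finite_measure_subadditive_finite) auto
  also have "\<dots> = (\<Sum>u\<in>ball G r v. hit_prob p E 0 (G, u))" by (simp add: hit_prob_zero)
  finally show ?thesis .
qed

text \<open>All centres \<open>v\<close> whose \<open>r\<close>-ball contains \<open>u\<close> lie in the \<open>2r\<close>-ball of any one of them.\<close>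
lemma card_small_ball_centres_le:
  assumes fg: "finite_graph n G"
  shows "card {v\<in>{..<n}. u \<in> ball G r v \<and> \<not> M < card (ball G (2 * r) v)} \<le> M"
proof (cases "{v\<in>{..<n}. u \<in> ball G r v \<and> \<not> M < card (ball G (2 * r) v)} = {}")
  case True
  show ?thesis unfolding True by simp
next
  case False
  have lf: "lf_graph G" using fg unfolding finite_graph_def by simp
  from False obtain v0 where v0: "u \<in> ball G r v0" "\<not> M < card (ball G (2 * r) v0)" by auto
  have "{v\<in>{..<n}. u \<in> ball G r v \<and> \<not> M < card (ball G (2 * r) v)} \<subseteq> ball G (2 * r) v0"
  proof
    fix v assume "v \<in> {v\<in>{..<n}. u \<in> ball G r v \<and> \<not> M < card (ball G (2 * r) v)}"
    then have "v \<in> ball G r u" using ball_sym[OF lf] by auto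
    then have "v \<in> ball G (r + r) v0" using ball_trans v0(1) by blast
    then show "v \<in> ball G (2 * r) v0" by (simp add: mult_2)
  qed
  then have "card {v\<in>{..<n}. u \<in> ball G r v \<and> \<not> M < card (ball G (2 * r) v)} \<le> card (ball G (2 * r) v0)"
    using finite_ball[OF lf] by (intro card_mono) auto
  then show ?thesis using v0(2) by simp
qed

lemma hit_prob_le_large_ball_indicator_plus_sum:
  assumes fg: "finite_graph n G" and E: "local_event_radius R E" and p: "0 \<le> p" "p \<le> 1"
    and v: "v < n"
  shows "hit_prob p E r (G, v) \<le> large_ball_indicator (2 * r) M (G, v) +
    (\<Sum>u<n. (if u \<in> ball G r v \<and> \<not> M < card (ball G (2 * r) v) then 1 else 0) * hit_prob p E 0 (G, u))"
proof (cases "M < card (ball G (2 * r) v)")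
  case True
  then show ?thesis using hit_prob_le_1[of p E r "(G, v)"] unfolding large_ball_indicator_def by simp
next
  case False
  have lf: "lf_graph G" using fg unfolding finite_graph_def by simp
  have "(\<Sum>u<n. (if u \<in> ball G r v \<and> \<not> M < card (ball G (2 * r) v) then 1 else 0) * hit_prob p E 0 (G, u))
      = (\<Sum>u<n. if u \<in> ball G r v then hit_prob p E 0 (G, u) else 0)"
    using False by (intro sum.cong) auto
  also have "\<dots> = (\<Sum>u\<in>{..<n} \<inter> ball G r v. hit_prob p E 0 (G, u))"
    by (simp add: sum.inter_restrict)
  also have "{..<n} \<inter> ball G r v = ball G r v" using ball_subset_lessThan[OF fg v] by auto
  finally show ?thesis
    using hit_prob_le_sum_hit_prob_zero[OF lf E p, of r v] False
    unfolding large_ball_indicator_def by simp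
qed

lemma sum_hit_prob_le:
  assumes fg: "finite_graph n G" and E: "local_event_radius R E" and p: "0 \<le> p" "p \<le> 1"
  shows "(\<Sum>v<n. hit_prob p E r (G, v)) \<le>
    (\<Sum>v<n. large_ball_indicator (2 * r) M (G, v)) + real M * (\<Sum>u<n. hit_prob p E 0 (G, u))"
proof -
  define c where "c v u = (if u \<in> ball G r v \<and> \<not> M < card (ball G (2 * r) v) then 1 else 0 :: real)"
    for v u
  define h where "h u = hit_prob p E 0 (G, u)" for u
  have h0: "0 \<le> h u" for u unfolding h_def by (rule hit_prob_nonneg)
  have "(\<Sum>v<n. hit_prob p E r (G, v)) \<le> (\<Sum>v<n. large_ball_indicator (2 * r) M (G, v) + (\<Sum>u<n. c v u * h u))"
    using hit_prob_le_large_ball_indicator_plus_sum[OF fg E p] unfolding c_def h_def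
    by (intro sum_mono) auto
  also have "\<dots> = (\<Sum>v<n. large_ball_indicator (2 * r) M (G, v)) + (\<Sum>u<n. h u * (\<Sum>v<n. c v u))"
  proof -
    have "(\<Sum>v<n. \<Sum>u<n. c v u * h u) = (\<Sum>u<n. \<Sum>v<n. c v u * h u)" by (rule sum.swap)
    also have "\<dots> = (\<Sum>u<n. h u * (\<Sum>v<n. c v u))" by (simp add: sum_distrib_left mult.commute)
    finally show ?thesis by (simp add: sum.distrib)
  qed
  also have "(\<Sum>u<n. h u * (\<Sum>v<n. c v u)) \<le> (\<Sum>u<n. h u * real M)"
  proof (intro sum_mono mult_left_mono h0)
    fix u
    have "(\<Sum>v<n. c v u) = real (card {v\<in>{..<n}. u \<in> ball G r v \<and> \<not> M < card (ball G (2 * r) v)})"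
      unfolding c_def by (simp add: sum.If_cases Int_def)
    then show "(\<Sum>v<n. c v u) \<le> real M" using card_small_ball_centres_le[OF fg, of u r M] by simp
  qed
  also have "(\<Sum>u<n. h u * real M) = real M * (\<Sum>u<n. hit_prob p E 0 (G, u))"
    unfolding h_def by (simp add: sum_distrib_left mult.commute)
  finally show ?thesis by simp
qed

lemma integral_hit_prob_le:
  assumes lim: "local_limit \<mu>" and E: "local_event_radius R E" and p: "0 \<le> p" "p \<le> 1"
  shows "integral\<^sup>L \<mu> (hit_prob p E r) \<le>
    integral\<^sup>L \<mu> (large_ball_indicator (2 * r) M) + real M * integral\<^sup>L \<mu> (hit_prob p E 0)"
proof -
  from lim obtain Gs where fg: "\<And>n. finite_graph n (Gs n)"
    and avg: "\<And>f. locally_continuous f \<Longrightarrow> bounded_on_lf f \<Longrightarrow>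
        (\<lambda>n. (\<Sum>v<n. f (Gs n, v)) / real n) \<longlonglongrightarrow> integral\<^sup>L \<mu> f"
    unfolding local_limit_def by blast
  let ?avg = "\<lambda>f n. (\<Sum>v<n. f (Gs n, v)) / real n"
  have "?avg (hit_prob p E r) n \<le>
      ?avg (large_ball_indicator (2 * r) M) n + real M * ?avg (hit_prob p E 0) n" for n
    using divide_right_mono[OF sum_hit_prob_le[OF fg[of n] E p, of r M], of "real n"]
    by (simp add: add_divide_distrib)
  moreover note locally_continuous_hit_prob[OF E p] bounded_on_lf_hit_prob[OF E p]
    locally_continuous_large_ball_indicator bounded_on_lf_large_ball_indicator
  ultimately show ?thesis
    by (intro LIMSEQ_le[OF avg tendsto_add[OF avg tendsto_mult_left[OF avg]]]) auto
qed

theorem mainTheorem15: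
  fixes \<mu> :: "rgraph measure" and E :: "rgraph \<Rightarrow> bool"
  assumes "prob_space \<mu>" and "sets \<mu> = sets rg_space" and "local_limit \<mu>"
    and "local_event E"
  shows "\<forall>\<delta>::real>0. \<forall>r::nat. \<exists>D::nat. \<forall>p::real. 0 \<le> p \<and> p \<le> 1 \<longrightarrow>
     measure (\<mu> \<Otimes>\<^sub>M perc_measure p)
       {z \<in> space (\<mu> \<Otimes>\<^sub>M perc_measure p).
          \<exists>u\<in>ball (fst (fst z)) r (snd (fst z)). E (perc_graph (fst (fst z)) (snd z), u)}
     \<le> real D * measure (\<mu> \<Otimes>\<^sub>M perc_measure p)
       {z \<in> space (\<mu> \<Otimes>\<^sub>M perc_measure p). E (perc_graph (fst (fst z)) (snd z), snd (fst z))}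
       + \<delta>"
proof -
  from \<open>local_event E\<close> obtain R where E: "local_event_radius R E"
    unfolding local_event_iff_radius by blast
  note hit_eq = measure_hit_event_eq_integral[OF assms(1,2) E]
  have root_eq: "measure (\<mu> \<Otimes>\<^sub>M perc_measure p)
       {z \<in> space (\<mu> \<Otimes>\<^sub>M perc_measure p). E (perc_graph (fst (fst z)) (snd z), snd (fst z))}
     = integral\<^sup>L \<mu> (hit_prob p E 0)" for p
    using hit_eq[of p 0] by simp
  show ?thesis unfolding hit_eq root_eq
  proof (intro allI impI)
    fix \<delta> :: real and r :: nat assume "0 < \<delta>"
    obtain M where "integral\<^sup>L \<mu> (large_ball_indicator (2 * r) M) < \<delta>"
      using order_tendstoD(2)[OF integral_large_ball_indicator_tendsto_0[OF assms(1,2)] \<open>0 < \<delta>\<close>]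
      by (auto simp: eventually_sequentially)
    then show "\<exists>D::nat. \<forall>p. 0 \<le> p \<and> p \<le> 1 \<longrightarrow>
        integral\<^sup>L \<mu> (hit_prob p E r) \<le> real D * integral\<^sup>L \<mu> (hit_prob p E 0) + \<delta>"
      using integral_hit_prob_le[OF assms(3) E, of _ r M] by (intro exI[of _ M]) fastforce
  qed
qed

end
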